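(* Let $q=3^m$ with $m\ge 1$ and let $f(x)=x^{q+2}$ on $\mathbb{F}_{q^2}$. Then $\beta_f=q+2$. Moreover, if $q\ge 9$, then $$\nu_{q+2}=\begin{cases}\frac{q-1}{2},& m \text{ even},\\ \frac{q+1}{2},& m\text{ odd},\end{cases}\qquad \nu_q=\begin{cases}\frac{q-1}{2},& m \text{ even},\\ \frac{q-3}{2},& m\text{ odd}.\end{cases}$$
   Context: For $f:\mathbb{F}_{q^2}\to\mathbb{F}_{q^2}$ and $a,b\in\mathbb{F}_{q^2}$, $\beta_f(a,b)$ is the number of $(x,y)\in\mathbb{F}_{q^2}^2$ with $f(x)-f(y)=b$ and $f(x+a)-f(y+a)=b$; $\beta_f=\max_{a,b\in\mathbb{F}_{q^2}^*}\beta_f(a,b)$. For the power function $f$, the boomerang spectrum is taken with $a=1$: $\nu_i=\#\{b\in\mathbb{F}_{q^2}^*:\ \beta_f(1,b)=i\}$. *)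

theory Defs
  imports Main
begin

definition boomerang_count :: "('a::{field,finite} \<Rightarrow> 'a) \<Rightarrow> 'a \<Rightarrow> 'a \<Rightarrow> nat" where
  "boomerang_count f a b = card {(x, y). f x - f y = b \<and> f (x + a) - f (y + a) = b}"

definition boomerang_uniformity :: "('a::{field,finite} \<Rightarrow> 'a) \<Rightarrow> nat" where
  "boomerang_uniformity f = Max {boomerang_count f a b | a b. a \<noteq> 0 \<and> b \<noteq> 0}"

definition boomerang_spectrum :: "('a::{field,finite} \<Rightarrow> 'a) \<Rightarrow> nat \<Rightarrow> nat" where
  "boomerang_spectrum f i = card {b. b \<noteq> 0 \<and> boomerang_count f 1 b = i}"

end

theory Submission
  imports Defs "HOL-Computational_Algebra.Polynomial" "HOL-Number_Theory.Residues"
begin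

(* Write x' = x^q for the Frobenius of F = GF(q^2) over Fq = {x. x' = x}, so that
   f x = x^(q+2) = x' x^2. In characteristic 3 one has f(x+1) - f(x) = E(x-1) + 1 with
   E(u) = u (u - u'), and since E(u) + E(u)' = (u - u')^2, E(u) = E(v) forces v = u, v = -u
   or u, v in Fq. Hence for a = 1 and b <> 0 the solutions (x, y) are the pairs (1+u, 1-u) with
   u outside Fq and u - u' (u^2+1) = b, together with the pairs in Fq^2 with (x-y)^3 = b.
   For b outside Fq only the first kind occurs, at most 5 times (the roots of a quintic).
   For b in Fq there are q pairs of the second kind, and the first kind are the roots outside
   Fq of u^2 + b u - 1: none or two according as b^2 + 1 is a square in Fq or not. Counting
   these b through the hyperbola s^2 - b^2 = 1 gives (q+1)/2 or (q-1)/2 according as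
   q = 1 or 3 mod 4, i.e. m even or odd. Scaling x -> a x reduces every a <> 0 to a = 1. *)

section \<open>Finite fields: roots, squares and characteristic\<close>

lemma card_eq_mult_card_image:
  assumes "finite A" and "\<And>x. x \<in> A \<Longrightarrow> card {y\<in>A. g y = g x} = k"
  shows "card A = k * card (g ` A)"
proof -
  have "{z\<in>g ` A. g x = z} = {g x}" if "x \<in> A" for x
    using that by auto
  hence "(\<Sum>x\<in>A. card {z\<in>g ` A. g x = z}) = card A"
    by simp
  moreover have "(\<Sum>x\<in>A. card {z\<in>g ` A. g x = z}) = k * card (g ` A)"
    using assms by (intro sum_multicount) auto
  ultimately show ?thesis
    by simp
qed

lemma
  fixes c :: "'a::idom"
  assumes "n \<ge> 1"
  shows finite_roots_power_eq: "finite {x. x ^ n = c}"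
    and card_roots_power_eq_le: "card {x. x ^ n = c} \<le> n"
proof -
  let ?p = "[:0, 1:] ^ n + [:- c:]"
  have "degree ?p = n"
    using assms by (simp add: degree_add_eq_left degree_linear_power)
  hence "?p \<noteq> 0" and "{x. x ^ n = c} = {x. poly ?p x = 0}"
    using assms by auto
  thus "finite {x. x ^ n = c}" and "card {x. x ^ n = c} \<le> n"
    using poly_roots_finite card_poly_roots_bound \<open>degree ?p = n\<close> by metis+
qed

lemma card_roots_power_plus_linear_le:
  fixes c :: "'a::idom"
  assumes "n \<ge> 2"
  shows "card {x. x ^ n + c * x = 0} \<le> n"
proof -
  let ?p = "[:0, 1:] ^ n + [:0, c:]"
  have "degree ?p = n"
    using assms by (simp add: degree_add_eq_left degree_linear_power)
  hence "card {x. poly ?p x = 0} \<le> n"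
    using assms card_poly_roots_bound[of ?p] by fastforce
  thus ?thesis by (simp add: algebra_simps)
qed

lemma diff_eq_diff_if_diffs_eq:
  fixes a b c d :: "'a::ab_group_add"
  assumes "a - b = e" and "c - d = e"
  shows "a - c = b - d"
  using assms by (simp add: algebra_simps)

lemma card_square_eq_square:
  fixes s :: "'a::field"
  assumes "(2::'a) \<noteq> 0"
  shows "{x. x ^ 2 = s ^ 2} = {s, - s}" and "card {x. x ^ 2 = s ^ 2} = (if s = 0 then 1 else 2)"
proof -
  show eq: "{x. x ^ 2 = s ^ 2} = {s, - s}"
    by (auto simp: power2_eq_iff)
  have "s \<noteq> - s" if "s \<noteq> 0"
  proof
    assume "s = - s"
    hence "2 * s = 0" by (metis mult_2 add.right_inverse)
    thus False using assms that by simp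
  qed
  thus "card {x. x ^ 2 = s ^ 2} = (if s = 0 then 1 else 2)"
    unfolding eq by auto
qed

text \<open>The library's \<open>finite_field_power_card_eq_same\<close> needs the sort \<open>finite_field\<close>;
  the statement concerns the sort \<open>{field, finite}\<close>.\<close>

lemma power_card_UNIV_eq_self:
  fixes x :: "'a::{field,finite}"
  shows "x ^ card (UNIV :: 'a set) = x"
proof (cases "x = 0")
  case False
  let ?U = "UNIV - {0::'a}"
  have "x ^ card ?U * (\<Prod>y\<in>?U. y) = (\<Prod>y\<in>?U. x * y)"
    by (simp add: prod.distrib)
  also have "\<dots> = 1 * (\<Prod>y\<in>?U. y)"
    by (simp, rule prod.reindex_bij_witness[of _ "\<lambda>y. y / x" "\<lambda>y. x * y"]) (use False in auto)
  finally have "x ^ card ?U = 1"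
    by (subst (asm) mult_right_cancel) (auto simp: prod_zero_iff)
  moreover have "card (UNIV :: 'a set) = Suc (card ?U)"
    using finite_UNIV_card_ge_0[where 'a='a] by (simp add: card_Diff_singleton)
  ultimately show ?thesis
    by (metis power_Suc mult_1_right)
qed (use finite_UNIV_card_ge_0[where 'a='a] in simp)

lemma exists_square_root_if_power_half_eq_one:
  fixes S :: "'a::field set"
  assumes "finite S" and "(2::'a) \<noteq> 0" and "\<And>y. y \<in> S \<Longrightarrow> - y \<in> S"
    and "card (S - {0}) = 2 * n" and "n \<ge> 1"
    and "\<And>y. y \<in> S \<Longrightarrow> y \<noteq> 0 \<Longrightarrow> y ^ (2 * n) = 1"
    and "z ^ n = 1"
  shows "\<exists>y\<in>S. y ^ 2 = z"
proof -
  let ?S = "S - {0}" and ?sq = "\<lambda>y::'a. y ^ 2"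
  have "card {y\<in>?S. ?sq y = ?sq x} = 2" if "x \<in> ?S" for x
  proof -
    have "{y\<in>?S. ?sq y = ?sq x} = {y. y ^ 2 = x ^ 2}"
      using card_square_eq_square(1)[OF assms(2), of x] that assms(3) by auto
    thus ?thesis using card_square_eq_square(2)[OF assms(2), of x] that by simp
  qed
  hence "card ?S = 2 * card (?sq ` ?S)"
    using assms(1) by (intro card_eq_mult_card_image) auto
  hence card_squares: "card (?sq ` ?S) = n"
    using assms(4) by simp
  have "?sq ` ?S \<subseteq> {w. w ^ n = 1}"
    using assms(6) by (auto simp flip: power_mult)
  moreover have "card {w::'a. w ^ n = 1} \<le> n"
    using assms(5) by (rule card_roots_power_eq_le)
  ultimately have "?sq ` ?S = {w. w ^ n = 1}"
    using card_squares finite_roots_power_eq[OF assms(5)] by (intro card_seteq) auto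
  hence "z \<in> ?sq ` ?S" using assms(7) by simp
  thus ?thesis by blast
qed

lemma CHAR_eq_if_card_UNIV_eq_prime_power:
  assumes "card (UNIV :: 'a::{field,finite} set) = p ^ k" and "prime p" and "k > 0"
  shows "CHAR('a) = p"
proof -
  have "prime CHAR('a)"
    by (simp add: finite_imp_CHAR_pos prime_CHAR_semidom)
  moreover have "CHAR('a) dvd p ^ k"
    using CHAR_dvd_CARD[where 'a='a] assms(1) by simp
  ultimately have "CHAR('a) dvd p"
    by (rule prime_dvd_power)
  with \<open>prime CHAR('a)\<close> assms(2) show ?thesis
    by (rule primes_dvd_imp_eq)
qed

lemma three_power_mod_4: "(3::nat) ^ m mod 4 = (if even m then 1 else 3)"
proof (induction m)
  case (Suc m)
  have "(3::nat) ^ Suc m mod 4 = 3 * (3 ^ m mod 4) mod 4"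
    by (simp add: mod_mult_right_eq)
  thus ?case
    using Suc by auto
qed simp

section \<open>The field with q^2 elements and its subfield Fq\<close>

locale square_order_field =
  fixes q :: nat and field_type :: "'a::{field,finite} itself"
  assumes card_UNIV: "card (UNIV :: 'a set) = q ^ 2"
    and q_power_CHAR: "\<exists>k. q = CHAR('a) ^ k"
begin

definition Fq :: "'a set" where
  "Fq = {x. x ^ q = x}"

lemma q_ge_2: "q \<ge> 2"
proof -
  have "card {0::'a, 1} \<le> card (UNIV :: 'a set)"
    by (rule card_mono) auto
  hence "2 \<le> q ^ 2"
    using card_UNIV by simp
  show ?thesis
  proof (rule ccontr)
    assume "\<not> q \<ge> 2"
    hence "q ^ 2 \<le> 1 ^ 2"
      by (intro power_mono) auto
    with \<open>2 \<le> q ^ 2\<close> show False by simp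
  qed
qed

lemma prime_CHAR: "prime CHAR('a)"
  by (simp add: finite_imp_CHAR_pos prime_CHAR_semidom)

lemma power_q_add: "(x + y :: 'a) ^ q = x ^ q + y ^ q"
  using q_power_CHAR freshmans_dream'[OF prime_CHAR] by blast

lemma power_q_minus: "(- x :: 'a) ^ q = - (x ^ q)"
proof -
  have "(- x) ^ q + x ^ q = 0"
    using q_ge_2 by (simp flip: power_q_add)
  thus ?thesis
    by (simp add: add_eq_0_iff2)
qed

lemma power_q_diff: "(x - y :: 'a) ^ q = x ^ q - y ^ q"
  using power_q_add[of x "- y"] by (simp add: power_q_minus)

lemma power_q_power_q: "(x ^ q :: 'a) ^ q = x"
  using power_card_UNIV_eq_self[of x] by (simp add: card_UNIV power2_eq_square power_mult)

lemma zero_in_Fq [simp]: "0 \<in> Fq" and one_in_Fq [simp]: "1 \<in> Fq"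
  using q_ge_2 by (simp_all add: Fq_def)

lemma add_in_Fq [simp]: "x \<in> Fq \<Longrightarrow> y \<in> Fq \<Longrightarrow> x + y \<in> Fq"
  by (simp add: Fq_def power_q_add)

lemma minus_in_Fq [simp]: "x \<in> Fq \<Longrightarrow> - x \<in> Fq"
  by (simp add: Fq_def power_q_minus)

lemma diff_in_Fq [simp]: "x \<in> Fq \<Longrightarrow> y \<in> Fq \<Longrightarrow> x - y \<in> Fq"
  by (simp add: Fq_def power_q_diff)

lemma mult_in_Fq [simp]: "x \<in> Fq \<Longrightarrow> y \<in> Fq \<Longrightarrow> x * y \<in> Fq"
  by (simp add: Fq_def power_mult_distrib)

lemma inverse_in_Fq [simp]: "x \<in> Fq \<Longrightarrow> inverse x \<in> Fq"
  by (simp add: Fq_def power_inverse)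

lemma divide_in_Fq [simp]: "x \<in> Fq \<Longrightarrow> y \<in> Fq \<Longrightarrow> x / y \<in> Fq"
  by (simp add: divide_inverse)

lemma power_q_power_commute: "(x ^ n :: 'a) ^ q = (x ^ q) ^ n"
  by (simp add: mult.commute flip: power_mult)

lemma power_in_Fq [simp]: "x \<in> Fq \<Longrightarrow> x ^ n \<in> Fq"
  by (simp add: Fq_def power_q_power_commute)

lemma of_nat_in_Fq [simp]: "of_nat n \<in> Fq"
  by (induction n) simp_all

lemma numeral_in_Fq [simp]: "numeral n \<in> Fq"
  using of_nat_in_Fq[of "numeral n"] by simp

lemma card_Fq_le: "card Fq \<le> q"
proof -
  have "Fq = {x. x ^ q + (- 1) * x = 0}"
    by (auto simp: Fq_def)
  thus ?thesis
    using card_roots_power_plus_linear_le[of q "- 1 :: 'a"] q_ge_2 by simp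
qed

lemma power_q_minus_self_eq_iff: "y ^ q - y = x ^ q - x \<longleftrightarrow> y - x \<in> Fq"
  unfolding Fq_def power_q_diff mem_Collect_eq by (metis add_diff_cancel_left diff_add_cancel)

lemma card_Fq: "card Fq = q"
proof (rule antisym[OF card_Fq_le])
  \<comment> \<open>The additive map x -> x^q - x has kernel Fq and takes values among the roots of y^q + y.\<close>
  let ?g = "\<lambda>x::'a. x ^ q - x"
  have "{y. ?g y = ?g x} = (\<lambda>k. k + x) ` Fq" for x
  proof
    show "{y. ?g y = ?g x} \<subseteq> (\<lambda>k. k + x) ` Fq"
    proof
      fix y assume "y \<in> {y. ?g y = ?g x}"
      hence "y - x \<in> Fq"
        using power_q_minus_self_eq_iff by blast
      thus "y \<in> (\<lambda>k. k + x) ` Fq"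
        by (rule rev_image_eqI) simp
    qed
    show "(\<lambda>k. k + x) ` Fq \<subseteq> {y. ?g y = ?g x}"
      using power_q_minus_self_eq_iff by (intro image_subsetI) simp
  qed
  hence "card {y. ?g y = ?g x} = card Fq" for x
    by (simp add: card_image inj_on_def)
  hence "card (UNIV :: 'a set) = card Fq * card (range ?g)"
    by (intro card_eq_mult_card_image) auto
  hence "q * q = card Fq * card (range ?g)"
    by (simp add: card_UNIV power2_eq_square)
  moreover have "card (range ?g) \<le> q"
  proof -
    have "range ?g \<subseteq> {y. y ^ q + 1 * y = 0}"
      by (rule image_subsetI) (simp add: power_q_diff power_q_power_q)
    hence "card (range ?g) \<le> card {y::'a. y ^ q + 1 * y = 0}"
      by (intro card_mono) auto
    thus ?thesis
      using card_roots_power_plus_linear_le[of q "1::'a"] q_ge_2 by simp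
  qed
  ultimately have "q * q \<le> card Fq * q"
    by (metis mult_le_mono2)
  thus "q \<le> card Fq"
    using q_ge_2 by simp
qed

lemma mult_diff_power_q_eq_cases:
  assumes eq: "u * (u - u ^ q) = v * (v - v ^ q)"
  shows "v = u \<or> v = - u \<or> (u \<in> Fq \<and> v \<in> Fq)"
proof -
  let ?w = "\<lambda>x::'a. x - x ^ q"
  have trace: "x * ?w x + (x * ?w x) ^ q = (?w x) ^ 2" for x
  proof -
    have "(x * ?w x) ^ q = x ^ q * (x ^ q - x)"
      by (simp add: power_mult_distrib power_q_diff power_q_power_q)
    thus ?thesis
      by (simp add: algebra_simps power2_eq_square)
  qed
  have "(?w v) ^ 2 = (?w u) ^ 2"
    using trace[of u] trace[of v] eq by simp
  hence w_cases: "?w v = ?w u \<or> ?w v = - ?w u"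
    by (simp add: power2_eq_iff)
  have in_Fq: "x \<in> Fq \<longleftrightarrow> ?w x = 0" for x
    unfolding Fq_def by auto
  show ?thesis
  proof (cases "?w u = 0")
    case True
    thus ?thesis using w_cases in_Fq by auto
  next
    case False
    from w_cases show ?thesis
    proof
      assume "?w v = ?w u"
      hence "u * ?w u = v * ?w u"
        using eq by simp
      with False have "u = v"
        by (rule mult_right_cancel[THEN iffD1])
      thus ?thesis by simp
    next
      assume "?w v = - ?w u"
      hence "u * ?w u = (- v) * ?w u"
        using eq by (simp only: mult_minus_left mult_minus_right)
      with False have "u = - v"
        by (rule mult_right_cancel[THEN iffD1])
      thus ?thesis by simp
    qed
  qed
qed

lemma card_antisymmetric_diff_fibre_le_5:
  fixes b :: 'a
  shows "card {u. u - u ^ q * (u ^ 2 + 1) = b} \<le> 5"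
proof -
  \<comment> \<open>Eliminating u^q between the equation and its conjugate leaves a quintic in u.\<close>
  define c where "c = b ^ q"
  let ?P = "[:- (b + c), - (b ^ 2), b - 2 * c, - 2, - c, - 1:]"
  have "poly ?P u = 0" if u: "u - u ^ q * (u ^ 2 + 1) = b" for u
  proof -
    define w where "w = u ^ q"
    have w: "w * (u ^ 2 + 1) = u - b"
      using u by (simp add: w_def algebra_simps)
    have "(u - u ^ q * (u ^ 2 + 1)) ^ q = c"
      using u by (simp add: c_def)
    hence w_conj: "w - u * (w ^ 2 + 1) = c"
      by (simp add: power_q_diff power_q_add power_mult_distrib power_q_power_q w_def power2_eq_square)
    have "poly ?P u = (u - b) * (u ^ 2 + 1) - u * (u - b) ^ 2 - u * (u ^ 2 + 1) ^ 2 - c * (u ^ 2 + 1) ^ 2"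
      by (simp add: algebra_simps power2_eq_square power3_eq_cube power_numeral_reduce)
    also have "\<dots> = (u ^ 2 + 1) ^ 2 * (w - u * (w ^ 2 + 1) - c)"
      unfolding w[symmetric] by (simp add: algebra_simps power2_eq_square)
    also have "\<dots> = 0"
      using w_conj by simp
    finally show ?thesis .
  qed
  hence "{u. u - u ^ q * (u ^ 2 + 1) = b} \<subseteq> {u. poly ?P u = 0}"
    by blast
  moreover have "card {u. poly ?P u = 0} \<le> 5"
    using card_poly_roots_bound[of ?P] by simp
  ultimately show ?thesis
    by (meson card_mono finite le_trans)
qed

end

section \<open>Odd characteristic: squares in Fq\<close>

locale odd_square_order_field = square_order_field +
  assumes odd_q: "odd q"
begin

lemma two_neq_zero: "(2::'a) \<noteq> 0"
proof
  assume "(2::'a) = 0"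
  hence "CHAR('a) dvd 2"
    using of_nat_eq_0_iff_char_dvd[where 'a='a, of 2] by simp
  hence "CHAR('a) \<le> 2"
    by (rule dvd_imp_le) simp
  hence "CHAR('a) = 2"
    using prime_gt_1_nat[OF prime_CHAR] by simp
  moreover obtain k where "q = CHAR('a) ^ k"
    using q_power_CHAR by blast
  ultimately have "q = 2 ^ k" by simp
  thus False
    using odd_q q_ge_2 by (cases k) auto
qed

lemma four_neq_zero: "(4::'a) \<noteq> 0"
proof -
  have "(2::'a) * 2 \<noteq> 0"
    by (intro no_zero_divisors two_neq_zero)
  thus ?thesis
    by simp
qed

lemma minus_one_neq_one: "(- 1 :: 'a) \<noteq> 1"
proof
  assume minus_one: "(- 1 :: 'a) = 1"
  have "(2::'a) = 1 + 1"
    by (rule one_add_one[symmetric])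
  also have "\<dots> = 1 + - 1"
    by (simp only: minus_one)
  also have "\<dots> = 0"
    by (rule add.right_inverse)
  finally show False
    using two_neq_zero by contradiction
qed

lemma q_ge_3: "q \<ge> 3"
  using q_ge_2 odd_q by presburger

lemma power_q_minus_one_eq_one:
  assumes "x \<in> Fq" and "x \<noteq> 0"
  shows "x ^ (q - 1) = 1"
proof -
  have "x * x ^ (q - 1) = x * 1"
    using assms q_ge_2 by (simp add: Fq_def flip: power_Suc)
  with assms(2) show ?thesis
    by (rule mult_left_cancel[THEN iffD1])
qed

lemma exists_sqrt_of_Fq:
  assumes "d \<in> Fq"
  shows "\<exists>r. r ^ 2 = d"
proof (cases "d = 0")
  case False
  obtain k where q: "q = 2 * k + 1"
    using odd_q oddE by blast
  define n where "n = 2 * k * (k + 1)" \<comment> \<open>that is, (q^2 - 1) / 2\<close>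
  have two_n: "card (UNIV - {0::'a}) = 2 * n"
    using card_UNIV by (simp add: card_Diff_singleton n_def q power2_eq_square algebra_simps)
  have "n = (q - 1) * (k + 1)"
    by (simp add: n_def q)
  hence "d ^ n = (d ^ (q - 1)) ^ (k + 1)"
    by (simp only: power_mult)
  hence "d ^ n = 1"
    using power_q_minus_one_eq_one[OF assms False] by simp
  moreover have "y ^ (2 * n) = 1" if "y \<noteq> 0" for y :: 'a
  proof -
    have "card (UNIV :: 'a set) = Suc (2 * n)"
      using two_n finite_UNIV_card_ge_0[where 'a='a] by (simp add: card_Diff_singleton)
    hence "y * y ^ (2 * n) = y * 1"
      using power_card_UNIV_eq_self[of y] by simp
    with that show ?thesis
      by (rule mult_left_cancel[THEN iffD1])
  qed
  moreover have "n \<ge> 1"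
    using q q_ge_3 by (simp add: n_def)
  ultimately have "\<exists>r\<in>UNIV. r ^ 2 = d"
    using two_neq_zero two_n by (intro exists_square_root_if_power_half_eq_one[where n = n]) auto
  thus ?thesis by blast
qed (intro exI[of _ 0], simp)

lemma minus_one_square_in_Fq_iff: "(\<exists>i\<in>Fq. i ^ 2 = - 1) \<longleftrightarrow> q mod 4 = 1"
proof
  assume "\<exists>i\<in>Fq. i ^ 2 = - 1"
  then obtain i where "i \<in> Fq" and i: "i ^ 2 = - 1"
    by blast
  hence "i \<noteq> 0"
    by auto
  have "(- 1 :: 'a) ^ ((q - 1) div 2) = (i ^ 2) ^ ((q - 1) div 2)"
    by (simp only: i)
  also have "\<dots> = i ^ (q - 1)"
    using odd_q by (simp flip: power_mult)
  also have "\<dots> = 1"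
    using \<open>i \<in> Fq\<close> \<open>i \<noteq> 0\<close> by (rule power_q_minus_one_eq_one)
  finally have "even ((q - 1) div 2)"
    using minus_one_neq_one by (auto simp: minus_one_power_iff split: if_splits)
  thus "q mod 4 = 1"
    using odd_q by presburger
next
  assume q4: "q mod 4 = 1"
  show "\<exists>i\<in>Fq. i ^ 2 = - 1"
  proof (rule exists_square_root_if_power_half_eq_one[where n = "(q - 1) div 2"])
    show "card (Fq - {0}) = 2 * ((q - 1) div 2)"
      using odd_q card_Fq by (simp add: card_Diff_singleton)
    show "(q - 1) div 2 \<ge> 1"
      using q4 q_ge_3 by presburger
    have "even ((q - 1) div 2)"
      using q4 by presburger
    thus "(- 1 :: 'a) ^ ((q - 1) div 2) = 1"
      by simp
    show "y ^ (2 * ((q - 1) div 2)) = 1" if "y \<in> Fq" "y \<noteq> 0" for y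
      using power_q_minus_one_eq_one[OF that] odd_q by simp
    show "finite Fq"
      by simp
  qed (simp_all add: two_neq_zero)
qed

lemma sqrt_in_Fq_eq:
  assumes "s \<in> Fq"
  shows "{x \<in> Fq. x ^ 2 = s ^ 2} = {s, - s}"
  using card_square_eq_square(1)[OF two_neq_zero, of s] assms by auto

lemma card_sqrt_minus_one_in_Fq: "card {i \<in> Fq. i ^ 2 = - 1} = (if q mod 4 = 1 then 2 else 0)"
proof (cases "q mod 4 = 1")
  case True
  then obtain i where "i \<in> Fq" and i: "i ^ 2 = - 1"
    using minus_one_square_in_Fq_iff by blast
  hence "{x \<in> Fq. x ^ 2 = - 1} = {i, - i}"
    using sqrt_in_Fq_eq[of i] by simp
  moreover have "i \<noteq> 0"
    using i by auto
  ultimately show ?thesis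
    using True card_square_eq_square(2)[OF two_neq_zero, of i] card_square_eq_square(1)[OF two_neq_zero, of i]
    by simp
next
  case False
  hence "{i \<in> Fq. i ^ 2 = - 1} = {}"
    using minus_one_square_in_Fq_iff by blast
  thus ?thesis
    using False by simp
qed

lemma card_sqrt_notin_Fq:
  assumes "d \<in> Fq"
  shows "card {r. r \<notin> Fq \<and> r ^ 2 = d} = (if \<exists>s\<in>Fq. s ^ 2 = d then 0 else 2)"
proof (cases "\<exists>s\<in>Fq. s ^ 2 = d")
  case True
  then obtain s where "s \<in> Fq" and "s ^ 2 = d"
    by blast
  hence "{r. r \<notin> Fq \<and> r ^ 2 = d} = {}"
    using card_square_eq_square(1)[OF two_neq_zero, of s] by auto
  thus ?thesis
    using True by simp
next
  case False
  obtain r where r: "r ^ 2 = d"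
    using exists_sqrt_of_Fq assms by blast
  have "r \<notin> Fq"
    using False r by blast
  hence "- r \<notin> Fq" and "r \<noteq> 0"
    using minus_in_Fq[of "- r"] by auto
  hence "{r. r \<notin> Fq \<and> r ^ 2 = d} = {r, - r}"
    using card_square_eq_square(1)[OF two_neq_zero, of r] \<open>r \<notin> Fq\<close> r by auto
  thus ?thesis
    using False card_square_eq_square[OF two_neq_zero, of r] \<open>r \<noteq> 0\<close> by simp
qed

lemma card_roots_quadratic_notin_Fq:
  assumes "b \<in> Fq" and "c \<in> Fq"
  shows "card {u. u \<notin> Fq \<and> u ^ 2 + b * u + c = 0}
    = (if \<exists>s\<in>Fq. s ^ 2 = b ^ 2 - 4 * c then 0 else 2)"
proof -
  let ?d = "b ^ 2 - 4 * c" and ?root = "\<lambda>r. (r - b) / 2"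
  have square: "(2 * u + b) ^ 2 = ?d + 4 * (u ^ 2 + b * u + c)" for u
    by (simp add: algebra_simps power2_eq_square)
  have quadratic: "u ^ 2 + b * u + c = 0 \<longleftrightarrow> (2 * u + b) ^ 2 = ?d" for u
    by (simp only: square add_cancel_left_right mult_eq_0_iff) (simp add: four_neq_zero)
  have root: "?root (2 * u + b) = u" and root_inv: "2 * ?root r + b = r" for u r
    using two_neq_zero by (simp_all add: field_simps)
  have in_Fq: "?root r \<in> Fq \<longleftrightarrow> r \<in> Fq" for r
  proof
    assume "?root r \<in> Fq"
    hence "2 * ?root r + b \<in> Fq"
      using assms by (intro add_in_Fq mult_in_Fq) simp_all
    thus "r \<in> Fq"
      by (simp only: root_inv)
  qed (use assms in simp)
  have "{u. u \<notin> Fq \<and> u ^ 2 + b * u + c = 0} = ?root ` {r. r \<notin> Fq \<and> r ^ 2 = ?d}"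
  proof
    show "{u. u \<notin> Fq \<and> u ^ 2 + b * u + c = 0} \<subseteq> ?root ` {r. r \<notin> Fq \<and> r ^ 2 = ?d}"
    proof
      fix u assume u: "u \<in> {u. u \<notin> Fq \<and> u ^ 2 + b * u + c = 0}"
      hence "2 * u + b \<in> {r. r \<notin> Fq \<and> r ^ 2 = ?d}"
        using quadratic in_Fq[of "2 * u + b"] root by auto
      thus "u \<in> ?root ` {r. r \<notin> Fq \<and> r ^ 2 = ?d}"
        by (rule rev_image_eqI) (rule root[symmetric])
    qed
    show "?root ` {r. r \<notin> Fq \<and> r ^ 2 = ?d} \<subseteq> {u. u \<notin> Fq \<and> u ^ 2 + b * u + c = 0}"
      using quadratic in_Fq root_inv by auto
  qed
  moreover have "inj ?root"
    using two_neq_zero by (auto intro!: injI simp: field_simps)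
  moreover have "?d \<in> Fq"
    using assms by simp
  ultimately show ?thesis
    by (simp add: card_image inj_on_subset[of ?root UNIV] card_sqrt_notin_Fq)
qed

definition pythagorean :: "'a set" where
  "pythagorean = {b \<in> Fq. \<exists>s\<in>Fq. s ^ 2 = b ^ 2 + 1}"

lemma zero_in_pythagorean: "0 \<in> pythagorean"
  by (auto simp: pythagorean_def intro: bexI[of _ 1])

lemma pythagorean_subset_Fq: "pythagorean \<subseteq> Fq"
  by (auto simp: pythagorean_def)

lemma card_unit_hyperbola: "card {(b, s). b \<in> Fq \<and> s \<in> Fq \<and> s ^ 2 = b ^ 2 + 1} = q - 1"
proof -
  let ?H = "{(b, s). b \<in> Fq \<and> s \<in> Fq \<and> s ^ 2 = b ^ 2 + 1}"
  let ?point = "\<lambda>t::'a. ((inverse t - t) / 2, (inverse t + t) / 2)"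
  have factor: "s ^ 2 = b ^ 2 + 1 \<longleftrightarrow> (s - b) * (s + b) = 1" for b s :: 'a
    by (auto simp: algebra_simps power2_eq_square)
  have "bij_betw ?point (Fq - {0}) ?H"
  proof (rule bij_betw_byWitness[where f' = "\<lambda>(b, s). s - b"])
    show "\<forall>t\<in>Fq - {0}. (\<lambda>(b, s). s - b) (?point t) = t"
      using two_neq_zero four_neq_zero by (simp add: field_simps)
    show "\<forall>p\<in>?H. ?point ((\<lambda>(b, s). s - b) p) = p"
    proof
      fix p assume "p \<in> ?H"
      then obtain b s where p: "p = (b, s)" and "s ^ 2 = b ^ 2 + 1"
        by blast
      hence "inverse (s - b) = s + b"
        using factor by (auto intro: inverse_unique)
      thus "?point ((\<lambda>(b, s). s - b) p) = p"
        using two_neq_zero p by (simp add: field_simps)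
    qed
    show "?point ` (Fq - {0}) \<subseteq> ?H"
    proof (rule image_subsetI)
      fix t :: 'a
      assume "t \<in> Fq - {0}"
      hence "t \<in> Fq" and "t \<noteq> 0"
        by auto
      have "((inverse t + t) / 2 - (inverse t - t) / 2) * ((inverse t + t) / 2 + (inverse t - t) / 2) = 1"
        using two_neq_zero four_neq_zero \<open>t \<noteq> 0\<close> by (simp add: field_simps)
      thus "?point t \<in> ?H"
        using \<open>t \<in> Fq\<close> factor by simp
    qed
    show "(\<lambda>(b, s). s - b) ` ?H \<subseteq> Fq - {0}"
      using factor by auto
  qed
  hence "card ?H = card (Fq - {0})"
    by (simp add: bij_betw_same_card)
  thus ?thesis
    by (simp add: card_Diff_singleton card_Fq)
qed

lemma card_pythagorean: "card pythagorean = (if q mod 4 = 1 then (q + 1) div 2 else (q - 1) div 2)"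
proof -
  \<comment> \<open>Project the hyperbola to b: the fibre over b has two points, or one if b^2 = -1.\<close>
  let ?legs = "\<lambda>b. {s \<in> Fq. s ^ 2 = b ^ 2 + 1}"
  have legs: "card (?legs b) = (if b ^ 2 = - 1 then 1 else 2)" if b: "b \<in> pythagorean" for b
  proof -
    obtain s where "s \<in> Fq" and s: "s ^ 2 = b ^ 2 + 1"
      using b unfolding pythagorean_def by blast
    hence "?legs b = {s, - s}"
      using sqrt_in_Fq_eq[of s] by simp
    moreover have "s = 0 \<longleftrightarrow> b ^ 2 = - 1"
      using s by (auto simp: eq_neg_iff_add_eq_0)
    ultimately show ?thesis
      using card_square_eq_square(2)[OF two_neq_zero, of s] card_square_eq_square(1)[OF two_neq_zero, of s]
      by auto
  qed
  have "{(b, s). b \<in> Fq \<and> s \<in> Fq \<and> s ^ 2 = b ^ 2 + 1} = Sigma pythagorean ?legs"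
    by (auto simp: pythagorean_def)
  hence "q - 1 = (\<Sum>b\<in>pythagorean. card (?legs b))"
    using card_unit_hyperbola by (simp add: card_SigmaI)
  also have "\<dots> = (\<Sum>b\<in>pythagorean. if b ^ 2 = - 1 then 1 else 2)"
    using legs by (rule sum.cong[OF refl])
  also have "\<dots> = card {b \<in> pythagorean. b ^ 2 = - 1} + 2 * card {b \<in> pythagorean. b ^ 2 \<noteq> - 1}"
    by (simp add: sum.If_cases Int_def set_diff_eq)
  finally have "q - 1 + card {b \<in> pythagorean. b ^ 2 = - 1} = 2 * card pythagorean"
    using card_Int_Diff[of pythagorean "{b. b ^ 2 = - 1}"] by (simp add: Int_def set_diff_eq)
  moreover have "{b \<in> pythagorean. b ^ 2 = - 1} = {i \<in> Fq. i ^ 2 = - 1}"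
    by (auto simp: pythagorean_def intro: bexI[of _ 0])
  ultimately show ?thesis
    using card_sqrt_minus_one_in_Fq odd_q by (auto split: if_splits)
qed

lemma card_Fq_diff_pythagorean:
  "card (Fq - pythagorean) = (if q mod 4 = 1 then (q - 1) div 2 else (q + 1) div 2)"
proof -
  have "card (Fq - pythagorean) = q - card pythagorean"
    using pythagorean_subset_Fq card_Fq by (simp add: card_Diff_subset finite_subset)
  moreover have "q - (q + 1) div 2 = (q - 1) div 2" and "q - (q - 1) div 2 = (q + 1) div 2"
    using odd_q by presburger+
  ultimately show ?thesis
    using card_pythagorean by simp
qed

lemma card_pythagorean_diff_zero:
  "card (pythagorean - {0}) = (if q mod 4 = 1 then (q - 1) div 2 else (q - 3) div 2)"
proof -
  have "(q + 1) div 2 - 1 = (q - 1) div 2" and "(q - 1) div 2 - 1 = (q - 3) div 2"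
    using odd_q by presburger+
  thus ?thesis
    using card_pythagorean zero_in_pythagorean by (simp add: card_Diff_singleton)
qed

end

section \<open>Characteristic 3: the boomerang counts of x^(q+2)\<close>

lemma boomerang_count_power_scale:
  fixes a b :: "'a::{field,finite}"
  assumes "a \<noteq> 0"
  shows "boomerang_count (\<lambda>x. x ^ n) a b = boomerang_count (\<lambda>x. x ^ n) 1 (b / a ^ n)"
proof -
  let ?scale = "\<lambda>(x, y). (a * x, a * y)"
  have diff_scaled: "(a * x) ^ n - (a * y) ^ n = b \<longleftrightarrow> x ^ n - y ^ n = b / a ^ n" for x y :: 'a
    using assms by (simp add: power_mult_distrib nonzero_eq_divide_eq right_diff_distrib[symmetric]
        mult.commute)
  let ?L = "{(x, y). x ^ n - y ^ n = b \<and> (x + a) ^ n - (y + a) ^ n = b}"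
  let ?R = "{(x, y). x ^ n - y ^ n = b / a ^ n \<and> (x + 1) ^ n - (y + 1) ^ n = b / a ^ n}"
  have shift: "a * x + a = a * (x + 1)" for x :: 'a
    by (simp add: algebra_simps)
  have scale_mem: "?scale p \<in> ?L \<longleftrightarrow> p \<in> ?R" for p
    by (cases p) (simp add: shift diff_scaled)
  have "?scale -` ?L = ?R"
    unfolding set_eq_iff vimage_eq using scale_mem by blast
  moreover have "card (?scale -` ?L) = card ?L"
  proof (rule card_vimage_inj)
    show "inj ?scale"
      using assms by (auto simp: inj_def)
    have "surj ?scale"
      by (rule surjI[where f = "\<lambda>(x, y). (x / a, y / a)"]) (use assms in auto)
    thus "?L \<subseteq> range ?scale"
      by simp
  qed
  ultimately show ?thesis
    unfolding boomerang_count_def by simp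
qed

locale char3_square_order_field = square_order_field q field_type
  for q :: nat and field_type :: "'a::{field,finite} itself" +
  assumes CHAR_eq_3: "CHAR('a) = 3"
begin

sublocale odd_square_order_field
proof
  obtain k where "q = CHAR('a) ^ k"
    using q_power_CHAR by blast
  thus "odd q"
    by (simp add: CHAR_eq_3)
qed

lemma three_eq_zero: "(3::'a) = 0"
  using of_nat_CHAR[where 'a='a] by (simp add: CHAR_eq_3)

lemma four_eq_one: "(4::'a) = 1"
proof -
  have "(4::'a) = 3 + 1"
    by simp
  thus ?thesis
    by (simp add: three_eq_zero)
qed

lemma cube_diff: "(x - y :: 'a) ^ 3 = x ^ 3 - y ^ 3"
  using freshmans_dream[OF prime_CHAR CHAR_eq_3[symmetric], of x "- y"] by simp

lemma cube_eq_iff: "(x :: 'a) ^ 3 = y ^ 3 \<longleftrightarrow> x = y"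
  using cube_diff[of x y] by auto

lemma exists_cube_root_in_Fq:
  assumes "b \<in> Fq"
  shows "\<exists>c\<in>Fq. c ^ 3 = b"
proof -
  have "inj (\<lambda>x::'a. x ^ 3)"
    by (rule injI) (simp add: cube_eq_iff)
  hence "surj (\<lambda>x::'a. x ^ 3)"
    by (rule finite_UNIV_inj_surj[OF finite_UNIV])
  then obtain c where c: "c ^ 3 = b"
    by (metis surjD)
  have "(c ^ q) ^ 3 = (c ^ 3) ^ q"
    by (simp add: mult.commute flip: power_mult)
  also have "\<dots> = c ^ 3"
    using c assms by (simp add: Fq_def)
  finally have "c ^ q = c"
    by (simp only: cube_eq_iff)
  thus ?thesis
    using c by (auto simp: Fq_def)
qed

lemma card_cube_difference_pairs:
  "card {(x, y). x \<in> Fq \<and> y \<in> Fq \<and> (x - y) ^ 3 = b} = (if b \<in> Fq then q else 0)"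
proof (cases "b \<in> Fq")
  case True
  then obtain c where "c \<in> Fq" and c: "c ^ 3 = b"
    using exists_cube_root_in_Fq by blast
  have "(x - y) ^ 3 = b \<longleftrightarrow> y = x - c" for x y
    using c by (auto simp: cube_eq_iff)
  hence "{(x, y). x \<in> Fq \<and> y \<in> Fq \<and> (x - y) ^ 3 = b} = (\<lambda>x. (x, x - c)) ` Fq"
    using \<open>c \<in> Fq\<close> by (auto simp: image_iff)
  moreover have "inj (\<lambda>x::'a. (x, x - c))"
    by (rule injI) simp
  ultimately show ?thesis
    using True card_Fq by (simp add: card_image inj_on_subset[of _ UNIV])
next
  case False
  have "(x - y) ^ 3 \<in> Fq" if "x \<in> Fq" and "y \<in> Fq" for x y
    using that by simp
  hence "{(x, y). x \<in> Fq \<and> y \<in> Fq \<and> (x - y) ^ 3 = b} = {}"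
    using False by blast
  thus ?thesis
    using False by simp
qed

lemma power_q_plus_2_in_Fq: "(x :: 'a) \<in> Fq \<Longrightarrow> x ^ (q + 2) = x ^ 3"
  by (simp add: Fq_def power_add power2_eq_square power3_eq_cube)

lemma power_q_plus_2_diff_in_Fq:
  assumes "x \<in> Fq" and "y \<in> Fq"
  shows "x ^ (q + 2) - y ^ (q + 2) = (x - y) ^ 3"
  using assms by (simp only: power_q_plus_2_in_Fq cube_diff)

lemma power_q_plus_2_succ_diff:
  fixes x :: 'a
  shows "(x + 1) ^ (q + 2) - x ^ (q + 2) = (x - 1) * ((x - 1) - (x - 1) ^ q) + 1"
proof -
  have "(x + 1) ^ (q + 2) - x ^ (q + 2)
      = (x - 1) * ((x - 1) - (x - 1) ^ q) + 1 + 3 * (x * x ^ q + x)"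
    by (simp add: power_add power_q_add power_q_diff algebra_simps power2_eq_square)
  thus ?thesis
    by (simp add: three_eq_zero)
qed

lemma power_q_plus_2_antisymmetric_diff:
  fixes u :: 'a
  shows "(1 + u) ^ (q + 2) - (1 - u) ^ (q + 2) = u - u ^ q * (u ^ 2 + 1)"
proof -
  have "(1 + u) ^ (q + 2) - (1 - u) ^ (q + 2) = u - u ^ q * (u ^ 2 + 1) + 3 * (u ^ q * u ^ 2 + u ^ q + u)"
    by (simp add: power_add power_q_add power_q_diff algebra_simps power2_eq_square)
  thus ?thesis
    by (simp add: three_eq_zero)
qed

lemma power_q_plus_2_antisymmetric_diff_succ:
  fixes u :: 'a
  shows "(1 + u + 1) ^ (q + 2) - (1 - u + 1) ^ (q + 2) = u - u ^ q * (u ^ 2 + 1)"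
proof -
  have "(1 + u + 1) ^ (q + 2) - (1 + u) ^ (q + 2) = u * (u - u ^ q) + 1"
    using power_q_plus_2_succ_diff[of "1 + u"] by simp
  moreover have "(1 - u + 1) ^ (q + 2) - (1 - u) ^ (q + 2) = u * (u - u ^ q) + 1"
    using power_q_plus_2_succ_diff[of "1 - u"] by (simp add: power_q_minus algebra_simps)
  ultimately have "(1 + u + 1) ^ (q + 2) - (1 - u + 1) ^ (q + 2) = (1 + u) ^ (q + 2) - (1 - u) ^ (q + 2)"
    by (rule diff_eq_diff_if_diffs_eq)
  thus ?thesis
    using power_q_plus_2_antisymmetric_diff[of u] by simp
qed

lemma antisymmetric_diff_eq_imp_quadratic:
  assumes "b \<in> Fq" and "u \<notin> Fq" and h: "u - u ^ q * (u ^ 2 + 1) = b"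
  shows "u ^ 2 + b * u - 1 = 0"
proof -
  define w where "w = u ^ q"
  have "(u - w * (u ^ 2 + 1)) ^ q = b"
    using h assms(1) by (simp add: w_def Fq_def)
  moreover have "w ^ q = u"
    by (simp add: w_def power_q_power_q)
  ultimately have h_conj: "w - u * (w ^ 2 + 1) = b"
    by (simp add: power_q_diff power_q_add power_mult_distrib power_q_power_commute flip: w_def)
  have "(u - w) * (2 - u * w) = (u - w * (u ^ 2 + 1)) - (w - u * (w ^ 2 + 1))"
    by (simp add: algebra_simps power2_eq_square)
  also have "\<dots> = 0"
    using h h_conj by (simp add: w_def)
  finally have uw: "u * w = 2"
    using assms(2) by (simp add: Fq_def w_def)
  have "u ^ 2 + b * u - 1 = u ^ 2 + (u - w * (u ^ 2 + 1)) * u - 1"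
    using h by (simp add: w_def)
  also have "\<dots> = u ^ 2 * (2 - u * w) - (u * w + 1)"
    by (simp add: algebra_simps power2_eq_square)
  also have "\<dots> = 0"
    using uw three_eq_zero by simp
  finally show ?thesis .
qed

lemma quadratic_imp_antisymmetric_diff_eq:
  assumes "b \<in> Fq" and "u \<notin> Fq" and quadratic: "u ^ 2 + b * u - 1 = 0"
  shows "u - u ^ q * (u ^ 2 + 1) = b"
proof -
  define w where "w = u ^ q"
  have "(u ^ 2 + b * u - 1) ^ q = 0"
    using quadratic q_ge_2 by simp
  hence quadratic_conj: "w ^ 2 + b * w - 1 = 0"
    using assms(1) by (simp add: power_q_diff power_q_add power_mult_distrib power_q_power_commute
        Fq_def flip: w_def)
  have "(u - w) * (u + w + b) = (u ^ 2 + b * u - 1) - (w ^ 2 + b * w - 1)"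
    by (simp add: algebra_simps power2_eq_square)
  hence "u + w + b = 0"
    using quadratic quadratic_conj assms(2) by (simp add: Fq_def w_def)
  hence "w + (u + b) = 0"
    by (simp add: algebra_simps)
  hence w: "w = - (u + b)"
    by (simp only: add_eq_0_iff2)
  have "u - w * (u ^ 2 + 1) - b = u * (u ^ 2 + b * u - 1) + 3 * u"
    unfolding w by (simp add: algebra_simps power2_eq_square)
  thus ?thesis
    using quadratic three_eq_zero by (simp add: w_def)
qed

lemma antisymmetric_diff_eq_iff_quadratic:
  assumes "b \<in> Fq" and "u \<notin> Fq"
  shows "u - u ^ q * (u ^ 2 + 1) = b \<longleftrightarrow> u ^ 2 + b * u - 1 = 0"
  using antisymmetric_diff_eq_imp_quadratic[OF assms] quadratic_imp_antisymmetric_diff_eq[OF assms]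
  by blast

lemma boomerang_pair_cases:
  fixes x y :: 'a
  assumes diff: "x ^ (q + 2) - y ^ (q + 2) = b"
    and diff_succ: "(x + 1) ^ (q + 2) - (y + 1) ^ (q + 2) = b" and "b \<noteq> 0"
  shows "x \<in> Fq \<and> y \<in> Fq \<or> x - 1 \<notin> Fq \<and> y = 1 - (x - 1)"
proof -
  have "(x + 1) ^ (q + 2) - x ^ (q + 2) = (y + 1) ^ (q + 2) - y ^ (q + 2)"
    using diff_succ diff by (rule diff_eq_diff_if_diffs_eq)
  hence "(x - 1) * ((x - 1) - (x - 1) ^ q) = (y - 1) * ((y - 1) - (y - 1) ^ q)"
    unfolding power_q_plus_2_succ_diff by simp
  hence "y - 1 = x - 1 \<or> y - 1 = - (x - 1) \<or> (x - 1 \<in> Fq \<and> y - 1 \<in> Fq)"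
    by (rule mult_diff_power_q_eq_cases)
  moreover have "y - 1 \<noteq> x - 1"
    using diff \<open>b \<noteq> 0\<close> by auto
  ultimately have cases: "y - 1 = - (x - 1) \<or> (x - 1 \<in> Fq \<and> y - 1 \<in> Fq)"
    by blast
  have in_Fq: "z \<in> Fq" if "z - 1 \<in> Fq" for z
    using add_in_Fq[OF that one_in_Fq] by simp
  show ?thesis
  proof (cases "x - 1 \<in> Fq")
    case True
    from cases have "y - 1 \<in> Fq"
    proof
      assume "y - 1 = - (x - 1)"
      thus ?thesis
        using minus_in_Fq[OF True] by (simp only:)
    qed blast
    thus ?thesis
      using True in_Fq by blast
  next
    case False
    hence "y - 1 = - (x - 1)"
      using cases by blast
    hence "y = 1 - (x - 1)"
      by (simp add: algebra_simps)
    thus ?thesis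
      using False by blast
  qed
qed

lemma boomerang_pairs_eq:
  assumes "b \<noteq> 0"
  shows "{(x, y). x ^ (q + 2) - y ^ (q + 2) = b \<and> (x + 1) ^ (q + 2) - (y + 1) ^ (q + 2) = b}
    = (\<lambda>u. (1 + u, 1 - u)) ` {u. u \<notin> Fq \<and> u - u ^ q * (u ^ 2 + 1) = b}
      \<union> {(x, y). x \<in> Fq \<and> y \<in> Fq \<and> (x - y) ^ 3 = b}"
    (is "?B = ?T1 \<union> ?T2")
proof
  show "?B \<subseteq> ?T1 \<union> ?T2"
  proof
    fix p assume "p \<in> ?B"
    then obtain x y where p: "p = (x, y)" and diff: "x ^ (q + 2) - y ^ (q + 2) = b"
      and diff_succ: "(x + 1) ^ (q + 2) - (y + 1) ^ (q + 2) = b"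
      by blast
    from boomerang_pair_cases[OF diff diff_succ assms] show "p \<in> ?T1 \<union> ?T2"
    proof
      assume "x \<in> Fq \<and> y \<in> Fq"
      thus ?thesis
        using p diff power_q_plus_2_diff_in_Fq by auto
    next
      assume anti: "x - 1 \<notin> Fq \<and> y = 1 - (x - 1)"
      moreover have "(x - 1) - (x - 1) ^ q * ((x - 1) ^ 2 + 1) = b"
        using diff anti power_q_plus_2_antisymmetric_diff[of "x - 1"] by simp
      ultimately show ?thesis
        using p by (intro UnI1 image_eqI[of _ _ "x - 1"]) auto
    qed
  qed
  show "?T1 \<union> ?T2 \<subseteq> ?B"
  proof
    fix p assume "p \<in> ?T1 \<union> ?T2"
    then consider (anti) u where "p = (1 + u, 1 - u)" and "u - u ^ q * (u ^ 2 + 1) = b"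
      | (Fq) x y where "p = (x, y)" and "x \<in> Fq" and "y \<in> Fq" and "(x - y) ^ 3 = b"
      by blast
    thus "p \<in> ?B"
    proof cases
      case anti
      thus ?thesis
        using power_q_plus_2_antisymmetric_diff[of u] power_q_plus_2_antisymmetric_diff_succ[of u]
        by simp
    next
      case Fq
      have "(x + 1) ^ (q + 2) - (y + 1) ^ (q + 2) = ((x + 1) - (y + 1)) ^ 3"
        using Fq by (intro power_q_plus_2_diff_in_Fq) simp_all
      thus ?thesis
        using Fq power_q_plus_2_diff_in_Fq by simp
    qed
  qed
qed

lemma boomerang_count_eq:
  fixes b :: 'a
  assumes "b \<noteq> 0"
  shows "boomerang_count (\<lambda>x. x ^ (q + 2)) 1 b
    = card {u. u \<notin> Fq \<and> u - u ^ q * (u ^ 2 + 1) = b} + (if b \<in> Fq then q else 0)"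
proof -
  let ?U = "{u. u \<notin> Fq \<and> u - u ^ q * (u ^ 2 + 1) = b}"
  let ?T1 = "(\<lambda>u. (1 + u, 1 - u)) ` ?U"
  let ?T2 = "{(x, y). x \<in> Fq \<and> y \<in> Fq \<and> (x - y) ^ 3 = b}"
  have "(1 + u, 1 - u) \<notin> ?T2" if "u \<in> ?U" for u
  proof
    assume "(1 + u, 1 - u) \<in> ?T2"
    hence "(1 + u) - 1 \<in> Fq"
      by (intro diff_in_Fq) simp_all
    with that show False
      by simp
  qed
  hence "?T1 \<inter> ?T2 = {}"
    by blast
  moreover have "inj (\<lambda>u::'a. (1 + u, 1 - u))"
    by (rule injI) simp
  hence "card ?T1 = card ?U"
    by (simp add: card_image inj_on_subset[of _ UNIV])
  ultimately have "card (?T1 \<union> ?T2) = card ?U + card ?T2"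
    by (simp add: card_Un_disjoint)
  thus ?thesis
    unfolding boomerang_count_def boomerang_pairs_eq[OF assms] card_cube_difference_pairs .
qed

lemma boomerang_count_in_Fq:
  assumes "b \<in> Fq" and "b \<noteq> 0"
  shows "boomerang_count (\<lambda>x. x ^ (q + 2)) 1 b = (if b \<in> pythagorean then q else q + 2)"
proof -
  have "{u. u \<notin> Fq \<and> u - u ^ q * (u ^ 2 + 1) = b} = {u. u \<notin> Fq \<and> u ^ 2 + b * u + (- 1) = 0}"
    using antisymmetric_diff_eq_iff_quadratic[OF assms(1)] by auto
  moreover have "b ^ 2 - 4 * (- 1) = b ^ 2 + 1"
    by (simp add: four_eq_one)
  ultimately have "card {u. u \<notin> Fq \<and> u - u ^ q * (u ^ 2 + 1) = b}
      = (if b \<in> pythagorean then 0 else 2)"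
    using card_roots_quadratic_notin_Fq[OF assms(1), of "- 1"] assms(1)
    by (simp add: pythagorean_def)
  thus ?thesis
    using boomerang_count_eq[OF assms(2)] assms(1) by simp
qed

lemma boomerang_count_notin_Fq:
  assumes "b \<notin> Fq"
  shows "boomerang_count (\<lambda>x. x ^ (q + 2)) 1 b \<le> 5"
proof -
  have "b \<noteq> 0"
    using assms by auto
  have "card {u. u \<notin> Fq \<and> u - u ^ q * (u ^ 2 + 1) = b} \<le> card {u. u - u ^ q * (u ^ 2 + 1) = b}"
    by (intro card_mono) auto
  also have "\<dots> \<le> 5"
    by (rule card_antisymmetric_diff_fibre_le_5)
  finally show ?thesis
    using boomerang_count_eq[OF \<open>b \<noteq> 0\<close>] assms by simp
qed

lemma boomerang_count_le:
  fixes b :: 'a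
  assumes "b \<noteq> 0"
  shows "boomerang_count (\<lambda>x. x ^ (q + 2)) 1 b \<le> q + 2"
proof (cases "b \<in> Fq")
  case True
  thus ?thesis
    using boomerang_count_in_Fq[OF True assms] by simp
next
  case False
  thus ?thesis
    using boomerang_count_notin_Fq[OF False] q_ge_3 by simp
qed

lemma boomerang_uniformity_power_q_plus_2: "boomerang_uniformity (\<lambda>x::'a. x ^ (q + 2)) = q + 2"
  unfolding boomerang_uniformity_def
proof (rule Max_eqI)
  let ?f = "\<lambda>x::'a. x ^ (q + 2)"
  show "finite {boomerang_count ?f a b | a b. a \<noteq> 0 \<and> b \<noteq> 0}"
    by (rule finite_subset[where B = "range (case_prod (boomerang_count ?f))"]) auto
  show "c \<le> q + 2" if c: "c \<in> {boomerang_count ?f a b | a b. a \<noteq> 0 \<and> b \<noteq> 0}" for c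
  proof -
    obtain a b where "c = boomerang_count ?f a b" and "a \<noteq> 0" and "b \<noteq> 0"
      using c by blast
    thus ?thesis
      using boomerang_count_power_scale[of a "q + 2" b] boomerang_count_le[of "b / a ^ (q + 2)"]
      by simp
  qed
  have "card (Fq - pythagorean) > 0"
    using card_Fq_diff_pythagorean q_ge_3 by simp
  hence "Fq - pythagorean \<noteq> {}"
    using card_gt_0_iff by blast
  then obtain b where b: "b \<in> Fq - pythagorean"
    by blast
  hence "b \<noteq> 0"
    using zero_in_pythagorean by auto
  hence "boomerang_count ?f 1 b = q + 2"
    using b boomerang_count_in_Fq by simp
  thus "q + 2 \<in> {boomerang_count ?f a b | a b. a \<noteq> 0 \<and> b \<noteq> 0}"
    using \<open>b \<noteq> 0\<close> by (intro CollectI exI[of _ "1::'a"] exI[of _ b]) simp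
qed

lemma boomerang_count_eq_q_plus_2_iff:
  fixes b :: 'a
  assumes "q \<ge> 9" and "b \<noteq> 0"
  shows "boomerang_count (\<lambda>x. x ^ (q + 2)) 1 b = q + 2 \<longleftrightarrow> b \<in> Fq - pythagorean"
proof (cases "b \<in> Fq")
  case True
  thus ?thesis
    using boomerang_count_in_Fq[OF True assms(2)] by simp
next
  case False
  thus ?thesis
    using boomerang_count_notin_Fq[OF False] assms(1) by simp
qed

lemma boomerang_count_eq_q_iff:
  fixes b :: 'a
  assumes "q \<ge> 9" and "b \<noteq> 0"
  shows "boomerang_count (\<lambda>x. x ^ (q + 2)) 1 b = q \<longleftrightarrow> b \<in> pythagorean"
proof (cases "b \<in> Fq")
  case True
  thus ?thesis
    using boomerang_count_in_Fq[OF True assms(2)] by simp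
next
  case False
  thus ?thesis
    using boomerang_count_notin_Fq[OF False] assms(1) pythagorean_subset_Fq by auto
qed

lemma boomerang_spectrum_q_plus_2:
  assumes "q \<ge> 9"
  shows "boomerang_spectrum (\<lambda>x::'a. x ^ (q + 2)) (q + 2) = card (Fq - pythagorean)"
proof -
  have "b \<in> {b. b \<noteq> 0 \<and> boomerang_count (\<lambda>x::'a. x ^ (q + 2)) 1 b = q + 2}
      \<longleftrightarrow> b \<in> Fq - pythagorean" for b
    using boomerang_count_eq_q_plus_2_iff[OF assms, of b] zero_in_pythagorean by auto
  hence "{b. b \<noteq> 0 \<and> boomerang_count (\<lambda>x::'a. x ^ (q + 2)) 1 b = q + 2} = Fq - pythagorean"
    by (simp only: set_eq_iff) simp
  thus ?thesis
    by (simp add: boomerang_spectrum_def)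
qed

lemma boomerang_spectrum_q:
  assumes "q \<ge> 9"
  shows "boomerang_spectrum (\<lambda>x::'a. x ^ (q + 2)) q = card (pythagorean - {0})"
proof -
  have "b \<in> {b. b \<noteq> 0 \<and> boomerang_count (\<lambda>x::'a. x ^ (q + 2)) 1 b = q}
      \<longleftrightarrow> b \<in> pythagorean - {0}" for b
    using boomerang_count_eq_q_iff[OF assms, of b] by auto
  hence "{b. b \<noteq> 0 \<and> boomerang_count (\<lambda>x::'a. x ^ (q + 2)) 1 b = q} = pythagorean - {0}"
    by (simp only: set_eq_iff) simp
  thus ?thesis
    by (simp add: boomerang_spectrum_def)
qed

end

theorem theorem8:
  fixes m q :: nat and f :: "'a::{field,finite} \<Rightarrow> 'a"
  assumes "m \<ge> 1" and "q = 3 ^ m" and "card (UNIV :: 'a set) = q ^ 2"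
    and "f = (\<lambda>x. x ^ (q + 2))"
  shows "boomerang_uniformity f = q + 2
       \<and> (q \<ge> 9 \<longrightarrow>
            boomerang_spectrum f (q + 2) = (if even m then (q - 1) div 2 else (q + 1) div 2)
          \<and> boomerang_spectrum f q = (if even m then (q - 1) div 2 else (q - 3) div 2))"
proof -
  have "card (UNIV :: 'a set) = 3 ^ (2 * m)"
    using assms(2,3) by (simp add: power_mult[symmetric] mult.commute)
  hence "CHAR('a) = 3"
    using assms(1) by (intro CHAR_eq_if_card_UNIV_eq_prime_power) auto
  then interpret char3_square_order_field q "TYPE('a)"
    using assms(2,3) by unfold_locales (auto intro: exI[of _ m])
  have "q mod 4 = 1 \<longleftrightarrow> even m"
    using three_power_mod_4[of m] assms(2) by simp
  thus ?thesis
    using boomerang_uniformity_power_q_plus_2 boomerang_spectrum_q_plus_2 boomerang_spectrum_q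
      card_Fq_diff_pythagorean card_pythagorean_diff_zero assms(4)
    by simp
qed

end
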